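(* Let $h(\eta)$ be a radially homogeneous polynomial of degree $l$ on $T_p^*Y$, written as $h(\eta)=\sum_{j=0}^{l'}\eta_0^j h_j(\eta')$ with $h_j$ a homogeneous polynomial of degree $l-j$ and $h_{l'}\neq0$, where $l'\leq l$. Then for every integer $k$, $h(\eta)|\eta|^{-k}$ lifts to define an element of $S^{\,l-k,\;l'+l-2k,\;l'+l-2k}_{eH}$, and, as parabolically homogeneous functions on the half spaces $\pm\eta_0>0$, its Heisenberg principal symbols are $$(\pm1)^{l'}\,|\eta_0|^{l'-k}\,h_{l'}(\eta').$$
   Context: $Y$ is a co-oriented contact manifold of dimension $2n-1$ and $p\in Y$; Darboux coordinates centered at $p$ give linear coordinates $\eta=(\eta_0,\eta')$, $\eta'\in\mathbb{R}^{2(n-1)}$, on $T_p^*Y$, with the contact line $L_p=\{\eta'=0\}$. The radial compactification of $T_p^*Y$ adds a sphere at infinity with defining function $r_R=1/|\eta|$. The extended Heisenberg compactification is obtained from the radial one by parabolically blowing up (with parabolic direction the conormal to the boundary) the two boundary points of the closure of $L_p$; it has three boundary hypersurfaces: the classical face with defining function $r_c$ and the upper and lower Heisenberg faces (over $\eta_0\to+\infty$, resp. $-\infty$) with defining functions $r_{e+},r_{e-}$; in the interior of the Heisenberg faces $|\eta_0|^{-1/2}$ is a defining function. Extended Heisenberg symbols: $S^{m_c,m_+,m_-}_{eH}=r_c^{-m_c}r_{e+}^{-m_+}r_{e-}^{-m_-}C^\infty$ of the extended Heisenberg compactification. The Heisenberg principal symbols of such a symbol, of Heisenberg orders $m_\pm$,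 are the leading terms at the upper/lower Heisenberg faces, represented by functions on the half spaces $\pm\eta_0>0$ homogeneous of degree $m_\pm$ with respect to the parabolic dilation $(\eta_0,\eta')\mapsto(\lambda^2\eta_0,\lambda\eta')$. "Lifts" means the pullback to the extended Heisenberg compactification. *)

theory Defs
  imports "HOL-Analysis.Analysis"
begin

coinductive Cinf :: "'a::euclidean_space set \<Rightarrow> ('a \<Rightarrow> real) \<Rightarrow> bool" for U where
  "continuous_on U f \<Longrightarrow>
   (\<forall>b\<in>Basis. \<exists>g. (\<forall>x\<in>U. ((\<lambda>t. f (x + t *\<^sub>R b)) has_real_derivative g x) (at 0)) \<and> Cinf U g)
   \<Longrightarrow> Cinf U f"

definition smooth_upto :: "('a::euclidean_space \<Rightarrow> bool) \<Rightarrow> ('a \<Rightarrow> bool) \<Rightarrow> ('a \<Rightarrow> real) \<Rightarrow> bool" where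
  "smooth_upto Cl Op F \<longleftrightarrow>
     (\<forall>p. Cl p \<longrightarrow> (\<exists>U G. open U \<and> p \<in> U \<and> Cinf U G \<and> (\<forall>x\<in>U. Op x \<longrightarrow> G x = F x)))"

definition setj :: "'m::finite \<Rightarrow> real \<Rightarrow> real^'m \<Rightarrow> real^'m" where
  "setj j \<sigma> v = (\<chi> i. if i = j then \<sigma> else v $ i)"

text \<open>Extended Heisenberg symbols S^{mc,mp,mm}_{eH} on T_p^*Y = R x R^d,
  eta = (eta_0, eta').  a lies in r_c^{-mc} r_{e+}^{-mp} r_{e-}^{-mm} C^infty of the
  extended Heisenberg compactification, written out in an atlas of the
  compactification:
  (1) interior;
  (2) classical face away from the poles: rho = 1/|eta'_j|, u = eta_0 rho, v = eta' rho
      (projective charts of the radial compactification), r_c = rho;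
  (3) interior of the Heisenberg faces (eps = +-1): t = |eta_0|^{-1/2}, w = eta' t, r_e = t;
  (4) corners: s = |eta'_j|/|eta_0|, q = |eta_0|/eta'_j^2, v = eta'/eta'_j, r_e = s, r_c = q
      (projective coordinates of the parabolic blow-up with weights (2,1)).\<close>
definition S_eH :: "real \<Rightarrow> real \<Rightarrow> real \<Rightarrow> (real \<times> (real^'m::finite) \<Rightarrow> real) \<Rightarrow> bool" where
  "S_eH mc mp mm a \<longleftrightarrow>
     Cinf UNIV a
   \<and> (\<forall>j. \<forall>\<sigma>\<in>{1,-1}. smooth_upto (\<lambda>(\<rho>::real, u::real, v::real^'m). \<rho> \<ge> 0) (\<lambda>(\<rho>, u, v). \<rho> > 0)
          (\<lambda>(\<rho>, u, v). \<rho> powr mc * a (u / \<rho>, (1 / \<rho>) *\<^sub>R setj j \<sigma> v)))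
   \<and> (\<forall>\<epsilon>\<in>{1,-1}. smooth_upto (\<lambda>(t::real, w::real^'m). t \<ge> 0) (\<lambda>(t, w). t > 0)
          (\<lambda>(t, w). t powr (if \<epsilon> = 1 then mp else mm) * a (\<epsilon> / t\<^sup>2, (1 / t) *\<^sub>R w)))
   \<and> (\<forall>\<epsilon>\<in>{1,-1}. \<forall>j. \<forall>\<sigma>\<in>{1,-1}.
          smooth_upto (\<lambda>(s::real, q::real, v::real^'m). s \<ge> 0 \<and> q \<ge> 0) (\<lambda>(s, q, v). s > 0 \<and> q > 0)
          (\<lambda>(s, q, v). s powr (if \<epsilon> = 1 then mp else mm) * q powr mc *
              a (\<epsilon> / (s\<^sup>2 * q), (1 / (s * q)) *\<^sub>R setj j \<sigma> v)))"

definition parab_hom :: "real \<Rightarrow> real \<Rightarrow> (real \<times> (real^'m::finite) \<Rightarrow> real) \<Rightarrow> bool" where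
  "parab_hom m \<epsilon> p \<longleftrightarrow>
     (\<forall>c>0. \<forall>x0 x'. \<epsilon> * x0 > 0 \<longrightarrow> p (c\<^sup>2 * x0, c *\<^sub>R x') = c powr m * p (x0, x'))"

text \<open>p represents the Heisenberg principal symbol (of Heisenberg order m) of a at
  the upper (eps = 1) / lower (eps = -1) Heisenberg face: p is parabolically
  homogeneous of degree m on eps*eta_0 > 0 and equals the leading term of a there,
  i.e. the restriction of |eta_0|^{m/2} a to the face, extended homogeneously.\<close>
definition heis_symbol :: "real \<Rightarrow> real \<Rightarrow> (real \<times> (real^'m::finite) \<Rightarrow> real) \<Rightarrow> (real \<times> (real^'m) \<Rightarrow> real) \<Rightarrow> bool" where
  "heis_symbol m \<epsilon> a p \<longleftrightarrow> parab_hom m \<epsilon> p \<and>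
     (\<forall>x0 x'. \<epsilon> * x0 > 0 \<longrightarrow>
        ((\<lambda>c. c powr (- m) * a (c\<^sup>2 * x0, c *\<^sub>R x')) \<longlongrightarrow> p (x0, x')) at_top)"

definition hom_poly :: "nat \<Rightarrow> (real^'m::finite \<Rightarrow> real) \<Rightarrow> bool" where
  "hom_poly e f \<longleftrightarrow> (\<exists>S c. finite S \<and> (\<forall>\<alpha>\<in>S. (\<Sum>i\<in>UNIV. \<alpha> i) = e) \<and>
      (\<forall>x. f x = (\<Sum>\<alpha>\<in>S. c \<alpha> * (\<Prod>i\<in>UNIV. (x $ i) ^ (\<alpha> i)))))"

end

theory Submission
  imports Defs "HOL-Computational_Algebra.Polynomial"
begin

text \<open>The lift is \<open>h(\<eta>) R(|\<eta>|^2)^(-k/2)\<close>, where \<open>R\<close> is a smooth positive function equal to the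
  identity on \<open>[1, \<infinity>)\<close>. In every chart of the extended Heisenberg compactification the weighted
  lift is, near the boundary, an explicit smooth expression. At the classical face radial
  homogeneity of \<open>h\<close> gives \<open>h(u, w) (u^2 + |w|^2)^(-k/2)\<close>. Parabolic dilation turns
  \<open>t^(l + l') h(x0 / t^2, x / t)\<close> into the polynomial \<open>\<Sum>j. t^(l' - j) x0^j h_j(x)\<close>, so at the
  Heisenberg faces and at the corners one gets this polynomial times \<open>(1 + t^2 |w|^2)^(-k/2)\<close>;
  its value at \<open>t = 0\<close>, namely \<open>x0^l' h_l'(x)\<close>, is the Heisenberg principal symbol.\<close>

lemma Cinf_coinduct_invariant:
  assumes "X f"
    and step: "\<And>f. X f \<Longrightarrow> continuous_on U f \<and>
      (\<forall>b\<in>Basis. \<exists>g. (\<forall>x\<in>U. ((\<lambda>t. f (x + t *\<^sub>R b)) has_real_derivative g x) (at 0)) \<and> X g)"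
  shows "Cinf U f"
  using assms(1) by (rule Cinf.coinduct) (use step in blast)

lemma CinfD:
  assumes "Cinf U f"
  shows "continuous_on U f \<and>
    (\<forall>b\<in>Basis. \<exists>g. (\<forall>x\<in>U. ((\<lambda>t. f (x + t *\<^sub>R b)) has_real_derivative g x) (at 0)) \<and> Cinf U g)"
  using assms by (cases rule: Cinf.cases) blast

lemma Cinf_real_derivative:
  assumes "Cinf V (g :: real \<Rightarrow> real)"
  obtains g' where "\<And>y. y \<in> V \<Longrightarrow> (g has_real_derivative g' y) (at y)" "Cinf V g'" "continuous_on V g"
proof -
  from assms obtain g' where g': "\<forall>y\<in>V. ((\<lambda>t. g (y + t)) has_real_derivative g' y) (at 0)" "Cinf V g'"
    and "continuous_on V g"
    by (cases rule: Cinf.cases) (auto simp: Basis_real_def)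
  moreover have "(g has_real_derivative g' y) (at y)" if "y \<in> V" for y
  proof -
    have "((\<lambda>t. g (t + y)) has_real_derivative g' y) (at 0)"
      using g'(1) that by (simp add: add.commute[of _ y])
    then show ?thesis using DERIV_shift[of g "g' y" 0 y] by simp
  qed
  ultimately show ?thesis using that by blast
qed

text \<open>The closure of \<open>Cinf U\<close> under sums, products and composition with smooth functions of
  one variable is again a post-fixed point of the functional defining \<open>Cinf\<close>, so by coinduction
  it is contained in \<open>Cinf U\<close>.\<close>

inductive Cinf_closure :: "'a::euclidean_space set \<Rightarrow> ('a \<Rightarrow> real) \<Rightarrow> bool" for U where
  base: "Cinf U f \<Longrightarrow> Cinf_closure U f"
| add: "Cinf_closure U f \<Longrightarrow> Cinf_closure U g \<Longrightarrow> Cinf_closure U (\<lambda>x. f x + g x)"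
| mult: "Cinf_closure U f \<Longrightarrow> Cinf_closure U g \<Longrightarrow> Cinf_closure U (\<lambda>x. f x * g x)"
| comp: "open V \<Longrightarrow> Cinf V (g :: real \<Rightarrow> real) \<Longrightarrow> Cinf_closure U f \<Longrightarrow> (\<forall>x\<in>U. f x \<in> V) \<Longrightarrow>
    Cinf_closure U (\<lambda>x. g (f x))"

lemma Cinf_closure_unfold:
  assumes "Cinf_closure U f"
  shows "continuous_on U f \<and>
    (\<forall>b\<in>Basis. \<exists>g. (\<forall>x\<in>U. ((\<lambda>t. f (x + t *\<^sub>R b)) has_real_derivative g x) (at 0)) \<and> Cinf_closure U g)"
  using assms
proof induction
  case (base f)
  then show ?case by (cases rule: Cinf.cases) (meson Cinf_closure.base)
next
  case (add f g)
  have "\<exists>h. (\<forall>x\<in>U. ((\<lambda>t. f (x + t *\<^sub>R b) + g (x + t *\<^sub>R b)) has_real_derivative h x) (at 0)) \<and>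
      Cinf_closure U h" if "b \<in> Basis" for b
  proof -
    from add that obtain f' g' where
      "\<forall>x\<in>U. ((\<lambda>t. f (x + t *\<^sub>R b)) has_real_derivative f' x) (at 0)" "Cinf_closure U f'"
      "\<forall>x\<in>U. ((\<lambda>t. g (x + t *\<^sub>R b)) has_real_derivative g' x) (at 0)" "Cinf_closure U g'"
      by blast
    then show ?thesis by (intro exI[of _ "\<lambda>x. f' x + g' x"]) (auto intro!: DERIV_add Cinf_closure.add)
  qed
  moreover have "continuous_on U (\<lambda>x. f x + g x)" using add by (intro continuous_intros) auto
  ultimately show ?case by blast
next
  case (mult f g)
  have "\<exists>h. (\<forall>x\<in>U. ((\<lambda>t. f (x + t *\<^sub>R b) * g (x + t *\<^sub>R b)) has_real_derivative h x) (at 0)) \<and>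
      Cinf_closure U h" if "b \<in> Basis" for b
  proof -
    from mult that obtain f' g' where f': "\<forall>x\<in>U. ((\<lambda>t. f (x + t *\<^sub>R b)) has_real_derivative f' x) (at 0)"
      "Cinf_closure U f'" and g': "\<forall>x\<in>U. ((\<lambda>t. g (x + t *\<^sub>R b)) has_real_derivative g' x) (at 0)"
      "Cinf_closure U g'"
      by blast
    have "((\<lambda>t. f (x + t *\<^sub>R b) * g (x + t *\<^sub>R b)) has_real_derivative f x * g' x + f' x * g x) (at 0)"
      if "x \<in> U" for x
      using DERIV_mult[OF f'(1)[rule_format, OF that] g'(1)[rule_format, OF that]]
      by (simp add: algebra_simps)
    then show ?thesis
      using f' g' mult by (intro exI[of _ "\<lambda>x. f x * g' x + f' x * g x"])
        (auto intro!: Cinf_closure.add Cinf_closure.mult)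
  qed
  moreover have "continuous_on U (\<lambda>x. f x * g x)" using mult by (intro continuous_intros) auto
  ultimately show ?case by blast
next
  case (comp V g f)
  obtain g' where g': "\<And>y. y \<in> V \<Longrightarrow> (g has_real_derivative g' y) (at y)" "Cinf V g'"
    "continuous_on V g"
    using Cinf_real_derivative[OF comp(2)] by blast
  have "\<exists>h. (\<forall>x\<in>U. ((\<lambda>t. g (f (x + t *\<^sub>R b))) has_real_derivative h x) (at 0)) \<and> Cinf_closure U h"
    if "b \<in> Basis" for b
  proof -
    from comp that obtain f' where f': "\<forall>x\<in>U. ((\<lambda>t. f (x + t *\<^sub>R b)) has_real_derivative f' x) (at 0)"
      "Cinf_closure U f'"
      by blast
    have "((\<lambda>t. g (f (x + t *\<^sub>R b))) has_real_derivative g' (f x) * f' x) (at 0)" if "x \<in> U" for x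
    proof -
      have "(g has_real_derivative g' (f x)) (at (f (x + 0 *\<^sub>R b)))" using g'(1) comp(4) that by simp
      from DERIV_chain2[OF this f'(1)[rule_format, OF that]] show ?thesis by simp
    qed
    moreover have "Cinf_closure U (\<lambda>x. g' (f x) * f' x)"
      by (rule Cinf_closure.mult[OF Cinf_closure.comp[OF comp(1) g'(2) comp(3) comp(4)] f'(2)])
    ultimately show ?thesis by (intro exI[of _ "\<lambda>x. g' (f x) * f' x"] conjI ballI)
  qed
  moreover have "continuous_on U (\<lambda>x. g (f x))"
    using continuous_on_compose2[OF g'(3), of U f] comp by auto
  ultimately show ?case by blast
qed

lemma Cinf_closure_imp_Cinf: "Cinf_closure U f \<Longrightarrow> Cinf U f"
  by (erule Cinf_coinduct_invariant[where X = "Cinf_closure U"], erule Cinf_closure_unfold)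

lemma Cinf_add: "Cinf U f \<Longrightarrow> Cinf U g \<Longrightarrow> Cinf U (\<lambda>x. f x + g x)"
  by (rule Cinf_closure_imp_Cinf, rule Cinf_closure.add; rule Cinf_closure.base)

lemma Cinf_mult: "Cinf U f \<Longrightarrow> Cinf U g \<Longrightarrow> Cinf U (\<lambda>x. f x * g x)"
  by (rule Cinf_closure_imp_Cinf, rule Cinf_closure.mult; rule Cinf_closure.base)

lemma Cinf_compose:
  "open V \<Longrightarrow> Cinf V (g :: real \<Rightarrow> real) \<Longrightarrow> Cinf U f \<Longrightarrow> (\<And>x. x \<in> U \<Longrightarrow> f x \<in> V) \<Longrightarrow>
    Cinf U (\<lambda>x. g (f x))"
  by (rule Cinf_closure_imp_Cinf, rule Cinf_closure.comp) (auto intro: Cinf_closure.base)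

lemma Cinf_const: "Cinf U (\<lambda>x. c)"
  by (rule Cinf_coinduct_invariant[where X = "\<lambda>f. \<exists>c. f = (\<lambda>x. c)"]) (auto intro!: exI[of _ "\<lambda>x. 0"])

lemma Cinf_bounded_linear:
  assumes "bounded_linear L"
  shows "Cinf U (L :: 'a::euclidean_space \<Rightarrow> real)"
proof (rule Cinf.intros)
  interpret bounded_linear L by fact
  show "continuous_on U L" by (rule linear_continuous_on) (rule assms)
  show "\<forall>b\<in>Basis. \<exists>g. (\<forall>x\<in>U. ((\<lambda>t. L (x + t *\<^sub>R b)) has_real_derivative g x) (at 0)) \<and> Cinf U g"
  proof
    fix b :: 'a
    have "((\<lambda>t. L x + t * L b) has_real_derivative L b) (at 0)" for x
      by (auto intro!: derivative_eq_intros)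
    then show "\<exists>g. (\<forall>x\<in>U. ((\<lambda>t. L (x + t *\<^sub>R b)) has_real_derivative g x) (at 0)) \<and> Cinf U g"
      by (intro exI[of _ "\<lambda>x. L b"] conjI Cinf_const) (simp_all add: add scale)
  qed
qed

lemma Cinf_sum: "finite S \<Longrightarrow> (\<And>i. i \<in> S \<Longrightarrow> Cinf U (f i)) \<Longrightarrow> Cinf U (\<lambda>x. \<Sum>i\<in>S. f i x)"
  by (induction S rule: finite_induct) (auto intro: Cinf_const Cinf_add)

lemma Cinf_prod: "finite S \<Longrightarrow> (\<And>i. i \<in> S \<Longrightarrow> Cinf U (f i)) \<Longrightarrow> Cinf U (\<lambda>x. \<Prod>i\<in>S. f i x)"
  by (induction S rule: finite_induct) (auto intro: Cinf_const Cinf_mult)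

lemma Cinf_power: "Cinf U f \<Longrightarrow> Cinf U (\<lambda>x. f x ^ n)"
  by (induction n) (auto intro: Cinf_const Cinf_mult)

lemma Cinf_cong:
  assumes "open U" "Cinf U f" "\<And>x. x \<in> U \<Longrightarrow> f x = g x"
  shows "Cinf U g"
proof (rule Cinf_coinduct_invariant[where X = "\<lambda>g. \<exists>f. Cinf U f \<and> (\<forall>x\<in>U. f x = g x)"])
  show "\<exists>f. Cinf U f \<and> (\<forall>x\<in>U. f x = g x)" using assms by blast
next
  fix g assume "\<exists>f. Cinf U f \<and> (\<forall>x\<in>U. f x = g x)"
  then obtain f where f: "Cinf U f" "\<forall>x\<in>U. f x = g x" by blast
  have "\<exists>d. (\<forall>x\<in>U. ((\<lambda>t. g (x + t *\<^sub>R b)) has_real_derivative d x) (at 0)) \<and>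
      (\<exists>f. Cinf U f \<and> (\<forall>x\<in>U. f x = d x))" if "b \<in> Basis" for b
  proof -
    from CinfD[OF f(1)] that obtain d
      where d: "\<forall>x\<in>U. ((\<lambda>t. f (x + t *\<^sub>R b)) has_real_derivative d x) (at 0)" "Cinf U d"
      by blast
    have "((\<lambda>t. g (x + t *\<^sub>R b)) has_real_derivative d x) (at 0)" if "x \<in> U" for x
    proof (rule has_field_derivative_transform_within_open[OF d(1)[rule_format, OF that]])
      show "open ((\<lambda>t::real. x + t *\<^sub>R b) -` U)"
        by (rule open_vimage[OF assms(1)]) (intro continuous_intros)
    qed (use f(2) that in auto)
    then show ?thesis using d(2) by blast
  qed
  moreover have "continuous_on U g" using CinfD[OF f(1)] f(2) continuous_on_cong by blast
  ultimately show "continuous_on U g \<and> (\<forall>b\<in>Basis. \<exists>d. (\<forall>x\<in>U. ((\<lambda>t. g (x + t *\<^sub>R b))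
      has_real_derivative d x) (at 0)) \<and> (\<exists>f. Cinf U f \<and> (\<forall>x\<in>U. f x = d x)))"
    by blast
qed

lemma Cinf_real_coinduct:
  assumes "X (f :: real \<Rightarrow> real)"
    and step: "\<And>f. X f \<Longrightarrow> continuous_on U f \<and> (\<exists>g. (\<forall>x\<in>U. (f has_real_derivative g x) (at x)) \<and> X g)"
  shows "Cinf U f"
proof (rule Cinf_coinduct_invariant[where X = X, OF assms(1)])
  fix f assume "X f"
  from step[OF this] obtain g where "continuous_on U f" "\<forall>x\<in>U. (f has_real_derivative g x) (at x)" "X g"
    by blast
  moreover have "((\<lambda>t. f (x + t *\<^sub>R b)) has_real_derivative g x) (at 0)"
    if "(f has_real_derivative g x) (at x)" "b \<in> Basis" for x b
    using DERIV_shift[of f "g x" 0 x] that by (simp add: Basis_real_def add.commute)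
  ultimately show "continuous_on U f \<and>
      (\<forall>b\<in>Basis. \<exists>g. (\<forall>x\<in>U. ((\<lambda>t. f (x + t *\<^sub>R b)) has_real_derivative g x) (at 0)) \<and> X g)"
    by blast
qed

lemma Cinf_powr_const: "Cinf {0<..} (\<lambda>x::real. x powr c)"
proof -
  have "Cinf {0<..} (\<lambda>x::real. d * x powr c)" for d
  proof (rule Cinf_real_coinduct[where X = "\<lambda>f. \<exists>c d. f = (\<lambda>x::real. d * x powr c)"])
    fix f :: "real \<Rightarrow> real" assume "\<exists>c d. f = (\<lambda>x. d * x powr c)"
    then obtain c d where f: "f = (\<lambda>x. d * x powr c)" by blast
    have "\<forall>x\<in>{0<..}. (f has_real_derivative (d * c) * x powr (c - 1)) (at x)"
      unfolding f by (auto intro!: derivative_eq_intros)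
    moreover have "continuous_on {0<..} f" unfolding f by (intro continuous_intros) auto
    ultimately show "continuous_on {0<..} f \<and>
        (\<exists>g. (\<forall>x\<in>{0<..}. (f has_real_derivative g x) (at x)) \<and> (\<exists>c d. g = (\<lambda>x. d * x powr c)))"
      by (intro conjI exI[of _ "\<lambda>x. (d * c) * x powr (c - 1)"]) auto
  qed blast
  from this[of 1] show ?thesis by simp
qed

lemma Cinf_powr:
  "Cinf U f \<Longrightarrow> (\<And>x. x \<in> U \<Longrightarrow> f x > 0) \<Longrightarrow> Cinf U (\<lambda>x. f x powr c)"
  by (rule Cinf_compose[OF _ Cinf_powr_const]) auto

lemma Cinf_inverse:
  assumes "Cinf U f" "\<And>x. x \<in> U \<Longrightarrow> f x > 0"
  shows "Cinf U (\<lambda>x. inverse (f x))"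
proof -
  have "Cinf {0<..} (inverse :: real \<Rightarrow> real)"
    by (rule Cinf_cong[OF _ Cinf_powr_const[of "-1"]]) (auto simp: powr_minus)
  from Cinf_compose[OF open_greaterThan this assms(1)] show ?thesis using assms(2) by auto
qed

lemmas Cinf_coordinates =
  Cinf_bounded_linear[OF bounded_linear_fst]
  Cinf_bounded_linear[OF bounded_linear_compose[OF bounded_linear_fst bounded_linear_snd]]
  Cinf_bounded_linear[OF bounded_linear_compose[OF bounded_linear_vec_nth bounded_linear_snd]]
  Cinf_bounded_linear[OF bounded_linear_compose[OF bounded_linear_vec_nth
    bounded_linear_compose[OF bounded_linear_snd bounded_linear_snd]]]

definition exp_flat :: "real \<Rightarrow> real" where
  "exp_flat y = (if y > 0 then exp (- 1 / y) else 0)"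

lemma poly_inverse_times_exp_flat_tendsto_0:
  "((\<lambda>t. poly P (1 / t) * exp (- 1 / t)) \<longlongrightarrow> 0) (at_right (0::real))"
proof -
  have "((\<lambda>y. \<Sum>i\<le>degree P. coeff P i * (y ^ i / exp y)) \<longlongrightarrow> 0) at_top"
    by (intro tendsto_null_sum tendsto_mult_right_zero tendsto_power_div_exp_0)
  moreover have "(\<Sum>i\<le>degree P. coeff P i * (y ^ i / exp y)) = poly P y / exp y" for y
    by (simp add: poly_altdef sum_divide_distrib)
  ultimately have "((\<lambda>y. poly P y / exp y) \<longlongrightarrow> 0) at_top" by simp
  from filterlim_compose[OF this filterlim_inverse_at_top_right]
  show ?thesis by (simp add: inverse_eq_divide exp_minus)
qed

text \<open>All derivatives of \<open>exp_flat\<close> have the form \<open>p(1/y) exp(-1/y)\<close> on \<open>y > 0\<close> (and vanish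
  on \<open>y \<le> 0\<close>) for a polynomial \<open>p\<close>; this family is closed under differentiation.\<close>

lemma Cinf_exp_flat: "Cinf UNIV exp_flat"
proof -
  define G where "G P = (\<lambda>y::real. if y > 0 then poly P (1 / y) * exp (- 1 / y) else 0)" for P
  have "Cinf UNIV (G P)" for P
  proof (rule Cinf_real_coinduct[where X = "\<lambda>f. \<exists>P. f = G P"])
    fix f assume "\<exists>P. f = G P"
    then obtain P where f: "f = G P" by blast
    define Q where "Q = monom 1 2 * (P - pderiv P)"
    have D: "(G P has_real_derivative G Q y) (at y)" for y
    proof (cases y "0 :: real" rule: linorder_cases)
      case greater
      have "((\<lambda>y. poly P (1 / y) * exp (- 1 / y)) has_real_derivative
          poly P (1 / y) * (exp (- 1 / y) * (1 / y^2)) + poly (pderiv P) (1 / y) * (- 1 / y^2) * exp (- 1 / y))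
          (at y)"
        using greater
        by (intro DERIV_mult' DERIV_chain2[OF poly_DERIV])
          (auto intro!: derivative_eq_intros simp: power2_eq_square)
      also have "poly P (1 / y) * (exp (- 1 / y) * (1 / y^2)) +
          poly (pderiv P) (1 / y) * (- 1 / y^2) * exp (- 1 / y) = G Q y"
        using greater by (simp add: G_def Q_def poly_monom field_simps)
      finally show ?thesis
        by (rule has_field_derivative_transform_within_open[where S = "{0<..}"])
          (use greater in \<open>auto simp: G_def\<close>)
    next
      case less
      have "((\<lambda>y. 0) has_real_derivative G Q y) (at y)" using less by (simp add: G_def)
      then show ?thesis
        by (rule has_field_derivative_transform_within_open[where S = "{..<0}"])
          (use less in \<open>auto simp: G_def\<close>)
    next
      case equal
      have "((\<lambda>t. (G P t - G P 0) / (t - 0)) \<longlongrightarrow> 0) (at (0::real))"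
        unfolding filterlim_at_split
      proof
        show "((\<lambda>t. (G P t - G P 0) / (t - 0)) \<longlongrightarrow> 0) (at_left (0::real))"
          by (rule Lim_transform_eventually[OF tendsto_const])
            (auto simp: G_def eventually_at_left_field intro: exI[of _ "-1"])
        show "((\<lambda>t. (G P t - G P 0) / (t - 0)) \<longlongrightarrow> 0) (at_right (0::real))"
          by (rule Lim_transform_eventually[OF poly_inverse_times_exp_flat_tendsto_0[of "P * [:0, 1:]"]])
            (auto simp: G_def eventually_at_right_field intro: exI[of _ 1])
      qed
      then show ?thesis unfolding equal has_field_derivative_iff by (simp add: G_def)
    qed
    have "continuous_on UNIV f" unfolding f
      by (rule continuous_at_imp_continuous_on) (use D DERIV_isCont in blast)
    then show "continuous_on UNIV f \<and> (\<exists>g. (\<forall>x\<in>UNIV. (f has_real_derivative g x) (at x)) \<and> (\<exists>P. g = G P))"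
      using D unfolding f by blast
  qed blast
  moreover have "G 1 = exp_flat" by (rule ext) (simp add: G_def exp_flat_def)
  ultimately show ?thesis by metis
qed

definition regularized_id :: "real \<Rightarrow> real" where
  "regularized_id r = r + (2 - r) * exp_flat (1 - r)"

lemma Cinf_regularized_id: "Cinf UNIV regularized_id"
proof -
  have affine: "Cinf UNIV (\<lambda>r::real. c - r)" for c
    using Cinf_add[OF Cinf_const Cinf_bounded_linear[OF bounded_linear_minus[OF bounded_linear_ident]]]
    by simp
  show ?thesis unfolding regularized_id_def[abs_def]
    by (intro Cinf_add Cinf_mult Cinf_bounded_linear[OF bounded_linear_ident] affine
        Cinf_compose[OF _ Cinf_exp_flat]) auto
qed

lemma regularized_id_pos: "regularized_id r > 0"
proof (cases "r < 1")
  case True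
  define y where "y = 1 - r"
  have y: "y > 0" using True y_def by simp
  have R: "regularized_id r = 1 - y + (1 + y) * exp (- 1 / y)"
    unfolding regularized_id_def exp_flat_def using y y_def by simp
  show ?thesis
  proof (cases "y \<le> 1")
    case True
    then show ?thesis unfolding R using y by (simp add: add_nonneg_pos)
  next
    case False
    have "(1 + y) * (1 - 1 / y) \<le> (1 + y) * exp (- 1 / y)"
      using exp_ge_add_one_self[of "- 1 / y"] y by (intro mult_left_mono) auto
    moreover have "(1 + y) * (1 - 1 / y) = y - 1 / y" using y by (simp add: field_simps)
    moreover have "1 / y < 1" using False by simp
    ultimately show ?thesis unfolding R by linarith
  qed
qed (simp add: regularized_id_def exp_flat_def)

lemma regularized_id_eq: "r \<ge> 1 \<Longrightarrow> regularized_id r = r"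
  by (simp add: regularized_id_def exp_flat_def)

lemma hom_poly_scaleR:
  assumes "hom_poly e f"
  shows "f (c *\<^sub>R x) = c ^ e * f x"
proof -
  from assms obtain S co where S: "finite S" "\<forall>\<alpha>\<in>S. (\<Sum>i\<in>UNIV. \<alpha> i) = e"
    "\<forall>x. f x = (\<Sum>\<alpha>\<in>S. co \<alpha> * (\<Prod>i\<in>UNIV. (x $ i) ^ (\<alpha> i)))"
    unfolding hom_poly_def by blast
  have "(\<Prod>i\<in>UNIV. ((c *\<^sub>R x) $ i) ^ (\<alpha> i)) = c ^ e * (\<Prod>i\<in>UNIV. (x $ i) ^ (\<alpha> i))"
    if "\<alpha> \<in> S" for \<alpha>
  proof -
    have "(\<Prod>i\<in>UNIV. ((c *\<^sub>R x) $ i) ^ (\<alpha> i)) = (\<Prod>i\<in>UNIV. c ^ (\<alpha> i)) * (\<Prod>i\<in>UNIV. (x $ i) ^ (\<alpha> i))"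
      by (simp add: power_mult_distrib prod.distrib)
    also have "(\<Prod>i\<in>UNIV. c ^ (\<alpha> i)) = c ^ e"
      using S(2) that by (simp add: power_sum[symmetric])
    finally show ?thesis .
  qed
  then show ?thesis using S(3) by (simp add: sum_distrib_left mult.left_commute)
qed

lemma Cinf_hom_poly:
  assumes "hom_poly e f" "\<And>i. Cinf U (\<lambda>z. \<psi> z $ i)"
  shows "Cinf U (\<lambda>z. f (\<psi> z))"
proof -
  from assms(1) obtain S co where "finite S"
    and f: "\<forall>x. f x = (\<Sum>\<alpha>\<in>S. co \<alpha> * (\<Prod>i\<in>UNIV. (x $ i) ^ (\<alpha> i)))"
    unfolding hom_poly_def by blast
  then have "Cinf U (\<lambda>z. \<Sum>\<alpha>\<in>S. co \<alpha> * (\<Prod>i\<in>UNIV. (\<psi> z $ i) ^ (\<alpha> i)))"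
    by (intro Cinf_sum Cinf_mult Cinf_const Cinf_prod finite Cinf_power assms(2))
  then show ?thesis using f by simp
qed

lemma Cinf_norm_sq:
  assumes "\<And>i. Cinf U (\<lambda>z. \<psi> z $ i)"
  shows "Cinf U (\<lambda>z. norm (\<psi> z :: real^'m::finite) ^ 2)"
  unfolding norm_vec_def L2_set_def
  by (simp add: sum_nonneg) (intro Cinf_sum Cinf_power assms finite)

lemma smooth_uptoI:
  assumes "open {x. Op x}" "Cinf {x. Op x} F" "open V" "Cinf V G"
    and "\<And>x. Cl x \<Longrightarrow> Op x \<or> x \<in> V" and "\<And>x. x \<in> V \<Longrightarrow> Op x \<Longrightarrow> G x = F x"
  shows "smooth_upto Cl Op F"
  unfolding smooth_upto_def
proof (intro allI impI)
  fix p assume "Cl p"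
  with assms(5) consider "Op p" | "p \<in> V" by blast
  then show "\<exists>U G. open U \<and> p \<in> U \<and> Cinf U G \<and> (\<forall>x\<in>U. Op x \<longrightarrow> G x = F x)"
  proof cases
    case 1
    with assms(1,2) show ?thesis by blast
  next
    case 2
    with assms(3,4,6) show ?thesis by blast
  qed
qed

lemma power_powr_eq: "0 < t \<Longrightarrow> (t ^ n) powr a = t powr (real n * a)"
  by (simp add: powr_realpow[symmetric] powr_powr)

lemma inverse_power_eq_powr: "0 < t \<Longrightarrow> (1 / t) ^ n = t powr (- real n)"
  by (simp add: powr_minus powr_realpow power_one_over inverse_eq_divide)

lemma inverse_power_mult_powr:
  "0 < t \<Longrightarrow> 0 \<le> a \<Longrightarrow> ((1 / t) ^ n * a) powr c = t powr (- real n * c) * a powr c"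
  by (simp add: powr_mult inverse_power_eq_powr powr_powr)

lemma norm_setj_ge_1: "\<sigma> \<in> {1, -1} \<Longrightarrow> 1 \<le> norm (setj j \<sigma> v)"
  using component_le_norm_cart[of "setj j \<sigma> v" j] by (auto simp: setj_def)

lemma Cinf_setj:
  assumes "\<And>i. Cinf U (\<lambda>z. \<psi> z $ i)"
  shows "Cinf U (\<lambda>z. setj j \<sigma> (\<psi> z) $ i)"
  unfolding setj_def by (cases "i = j") (auto intro: assms Cinf_const)

lemma Cinf_scaleR_component:
  assumes "Cinf U f" "\<And>i. Cinf U (\<lambda>z. \<psi> z $ i)"
  shows "Cinf U (\<lambda>z. (f z *\<^sub>R \<psi> z) $ i)"
  using Cinf_mult[OF assms(1) assms(2)] by simp

lemma norm_scaleR_ge_1: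
  fixes w :: "'a::real_normed_vector"
  assumes "0 < c" "c \<le> 1" "1 \<le> norm w"
  shows "1 \<le> norm ((1 / c) *\<^sub>R w)"
proof -
  have "1 \<le> norm w / c" using assms by (simp add: le_divide_eq)
  then show ?thesis using assms(1) by simp
qed

locale eta0_expansion =
  fixes hs :: "nat \<Rightarrow> real^'m::finite \<Rightarrow> real" and h :: "real \<times> (real^'m) \<Rightarrow> real"
    and l l' :: nat and k :: int
  assumes degree_le: "l' \<le> l"
    and hom_poly_coeff: "\<And>j. j \<le> l' \<Longrightarrow> hom_poly (l - j) (hs j)"
    and h_expansion: "\<And>x0 x'. h (x0, x') = (\<Sum>j\<le>l'. x0 ^ j * hs j x')"
begin

definition lift :: "real \<times> (real^'m) \<Rightarrow> real" where
  "lift \<eta> = h \<eta> * regularized_id (norm \<eta> ^ 2) powr (- real_of_int k / 2)"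

definition rescaled :: "real \<Rightarrow> real \<Rightarrow> real^'m \<Rightarrow> real" where
  "rescaled t x0 x = (\<Sum>j\<le>l'. t ^ (l' - j) * x0 ^ j * hs j x)"

lemma h_scaleR: "h (c *\<^sub>R \<eta>) = c ^ l * h \<eta>"
proof (cases \<eta>)
  case (Pair x0 x)
  have "(c * x0) ^ j * hs j (c *\<^sub>R x) = c ^ l * (x0 ^ j * hs j x)" if "j \<le> l'" for j
  proof -
    have "(c * x0) ^ j * hs j (c *\<^sub>R x) = (c ^ j * c ^ (l - j)) * (x0 ^ j * hs j x)"
      using hom_poly_scaleR[OF hom_poly_coeff[OF that]] by (simp add: power_mult_distrib ac_simps)
    also have "c ^ j * c ^ (l - j) = c ^ l"
      using that degree_le by (simp flip: power_add)
    finally show ?thesis .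
  qed
  then show ?thesis by (simp add: Pair h_expansion sum_distrib_left)
qed

lemma h_parabolic_dilation:
  assumes "t \<noteq> 0"
  shows "h (x0 / t^2, (1 / t) *\<^sub>R x) = (1 / t) ^ (l + l') * rescaled t x0 x"
proof -
  have "(x0 / t^2) ^ j * hs j ((1 / t) *\<^sub>R x) = (1 / t) ^ (l + l') * (t ^ (l' - j) * x0 ^ j * hs j x)"
    if j: "j \<le> l'" for j
  proof -
    have "(x0 / t^2) ^ j * hs j ((1 / t) *\<^sub>R x) = (1 / t) ^ (l + j) * (x0 ^ j * hs j x)"
      using hom_poly_scaleR[OF hom_poly_coeff[OF j]] j degree_le
      by (simp add: power_divide power_mult[symmetric] power_add[symmetric] field_simps)
    also have "(1 / t) ^ (l + j) = (1 / t) ^ (l + l') * t ^ (l' - j)"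
    proof -
      obtain d where d: "l' = j + d" using le_Suc_ex[OF j] by blast
      have "(1 / t) ^ (l + l') * t ^ (l' - j) = (1 / t) ^ (l + j) * ((1 / t) ^ d * t ^ d)"
        by (simp add: d power_add ac_simps)
      also have "(1 / t) ^ d * t ^ d = 1"
        using assms by (simp flip: power_mult_distrib)
      finally show ?thesis by simp
    qed
    finally show ?thesis by simp
  qed
  then show ?thesis by (simp add: h_expansion rescaled_def sum_distrib_left)
qed

lemma rescaled_mult: "rescaled (s * q) (e * q) x = q ^ l' * rescaled s e x"
  unfolding rescaled_def sum_distrib_left
proof (rule sum.cong[OF refl])
  fix j assume "j \<in> {..l'}"
  then have "q ^ (l' - j) * q ^ j = q ^ l'" by (simp flip: power_add)
  then show "(s * q) ^ (l' - j) * (e * q) ^ j * hs j x = q ^ l' * (s ^ (l' - j) * e ^ j * hs j x)"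
    by (simp add: power_mult_distrib ac_simps)
qed

lemma rescaled_zero: "rescaled 0 x0 x = x0 ^ l' * hs l' x"
proof -
  have "rescaled 0 x0 x = (\<Sum>j\<in>{l'}. 0 ^ (l' - j) * x0 ^ j * hs j x)"
    unfolding rescaled_def by (rule sum.mono_neutral_right) auto
  then show ?thesis by simp
qed

lemma Cinf_h:
  assumes "Cinf U \<phi>0" "\<And>i. Cinf U (\<lambda>z. \<phi> z $ i)"
  shows "Cinf U (\<lambda>z. h (\<phi>0 z, \<phi> z))"
  unfolding h_expansion
  by (intro Cinf_sum Cinf_mult Cinf_power Cinf_hom_poly[OF hom_poly_coeff] assms finite_atMost) auto

lemma Cinf_rescaled:
  assumes "Cinf U \<tau>" "Cinf U \<xi>" "\<And>i. Cinf U (\<lambda>z. \<phi> z $ i)"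
  shows "Cinf U (\<lambda>z. rescaled (\<tau> z) (\<xi> z) (\<phi> z))"
  unfolding rescaled_def
  by (intro Cinf_sum Cinf_mult Cinf_power Cinf_hom_poly[OF hom_poly_coeff] assms finite_atMost) auto

lemma Cinf_lift:
  assumes "Cinf U \<phi>0" "\<And>i. Cinf U (\<lambda>z. \<phi> z $ i)"
  shows "Cinf U (\<lambda>z. lift (\<phi>0 z, \<phi> z))"
proof -
  have "Cinf U (\<lambda>z. regularized_id (\<phi>0 z ^ 2 + norm (\<phi> z) ^ 2))"
    by (intro Cinf_compose[OF open_UNIV Cinf_regularized_id] Cinf_add Cinf_power Cinf_norm_sq assms) auto
  then have "Cinf U (\<lambda>z. h (\<phi>0 z, \<phi> z) * regularized_id (\<phi>0 z ^ 2 + norm (\<phi> z) ^ 2) powr (- k / 2))"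
    by (intro Cinf_mult Cinf_h Cinf_powr assms regularized_id_pos)
  then show ?thesis by (simp add: lift_def norm_Pair)
qed

lemma lift_eq_norm_sq: "1 \<le> norm \<eta> \<Longrightarrow> lift \<eta> = h \<eta> * (norm \<eta> ^ 2) powr (- real_of_int k / 2)"
  by (simp add: lift_def regularized_id_eq one_le_power)

lemma lift_eq:
  assumes "1 \<le> norm \<eta>"
  shows "lift \<eta> = h \<eta> * norm \<eta> powr (- real_of_int k)"
proof -
  have "0 < norm \<eta>" using assms by linarith
  then show ?thesis using assms by (simp add: lift_eq_norm_sq power_powr_eq)
qed

lemma lift_radial:
  assumes "0 < \<rho>" "1 \<le> norm ((1 / \<rho>) *\<^sub>R \<eta>)"
  shows "\<rho> powr (real l - real_of_int k) * lift ((1 / \<rho>) *\<^sub>R \<eta>) = h \<eta> * (norm \<eta> ^ 2) powr (- real_of_int k / 2)"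
proof -
  have "norm ((1 / \<rho>) *\<^sub>R \<eta>) ^ 2 = (1 / \<rho>) ^ 2 * norm \<eta> ^ 2"
    using assms(1) by (simp add: power_divide field_simps)
  then have "lift ((1 / \<rho>) *\<^sub>R \<eta>) = (1 / \<rho>) ^ l * h \<eta> * ((1 / \<rho>) ^ 2 * norm \<eta> ^ 2) powr (- real_of_int k / 2)"
    using lift_eq_norm_sq[OF assms(2)] by (simp only: h_scaleR)
  also have "((1 / \<rho>) ^ 2 * norm \<eta> ^ 2) powr (- real_of_int k / 2) =
      \<rho> powr real_of_int k * (norm \<eta> ^ 2) powr (- real_of_int k / 2)"
    using assms(1) by (subst inverse_power_mult_powr) auto
  also have "(1 / \<rho>) ^ l * h \<eta> * (\<rho> powr real_of_int k * (norm \<eta> ^ 2) powr (- real_of_int k / 2)) =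
      \<rho> powr (- real l + real_of_int k) * (h \<eta> * (norm \<eta> ^ 2) powr (- real_of_int k / 2))"
    using assms(1) by (simp add: inverse_power_eq_powr powr_add[symmetric])
  finally show ?thesis using assms(1) by (simp add: powr_add[symmetric])
qed

lemma lift_parabolic_dilation:
  assumes "0 < t" "1 \<le> norm (x0 / t^2, (1 / t) *\<^sub>R x)"
  shows "t powr (real l' + real l - 2 * real_of_int k) * lift (x0 / t^2, (1 / t) *\<^sub>R x)
    = rescaled t x0 x * (x0^2 + t^2 * norm x ^ 2) powr (- real_of_int k / 2)"
proof -
  have "norm (x0 / t^2, (1 / t) *\<^sub>R x) ^ 2 = (1 / t) ^ 4 * (x0^2 + t^2 * norm x ^ 2)"
    using assms(1) by (simp add: norm_Pair power_divide field_simps)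
  then have "lift (x0 / t^2, (1 / t) *\<^sub>R x) = (1 / t) ^ (l + l') * rescaled t x0 x *
      ((1 / t) ^ 4 * (x0^2 + t^2 * norm x ^ 2)) powr (- real_of_int k / 2)"
    using lift_eq_norm_sq[OF assms(2)] assms(1) by (simp only: h_parabolic_dilation[of t] less_irrefl)
  also have "((1 / t) ^ 4 * (x0^2 + t^2 * norm x ^ 2)) powr (- real_of_int k / 2) =
      t powr (2 * real_of_int k) * (x0^2 + t^2 * norm x ^ 2) powr (- real_of_int k / 2)"
    using assms(1) by (subst inverse_power_mult_powr) auto
  also have "(1 / t) ^ (l + l') * rescaled t x0 x *
      (t powr (2 * real_of_int k) * (x0^2 + t^2 * norm x ^ 2) powr (- real_of_int k / 2)) =
      t powr (- real (l + l') + 2 * real_of_int k) *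
      (rescaled t x0 x * (x0^2 + t^2 * norm x ^ 2) powr (- real_of_int k / 2))"
    using assms(1) by (simp add: inverse_power_eq_powr powr_add)
  finally show ?thesis using assms(1) by (simp add: powr_add[symmetric])
qed


lemma smooth_upto_classical_chart:
  assumes "\<sigma> \<in> {1, -1}"
  shows "smooth_upto (\<lambda>(\<rho>::real, u::real, v::real^'m). \<rho> \<ge> 0) (\<lambda>(\<rho>, u, v). \<rho> > 0)
    (\<lambda>(\<rho>, u, v). \<rho> powr (real l - real_of_int k) * lift (u / \<rho>, (1 / \<rho>) *\<^sub>R setj j \<sigma> v))"
proof (rule smooth_uptoI[where V = "{z. fst z < 1}"])
  let ?w = "\<lambda>z::real \<times> real \<times> (real^'m). setj j \<sigma> (snd (snd z))"
  let ?G = "\<lambda>z. h (fst (snd z), ?w z) * (fst (snd z) ^ 2 + norm (?w z) ^ 2) powr (- real_of_int k / 2)"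
  have w: "Cinf U (\<lambda>z. ?w z $ i)" for U i by (intro Cinf_setj Cinf_coordinates)
  show "open {z::real \<times> real \<times> (real^'m). case z of (\<rho>, u, v) \<Rightarrow> \<rho> > 0}"
    by (simp add: case_prod_unfold open_Collect_less continuous_intros)
  show "open {z::real \<times> real \<times> (real^'m). fst z < 1}"
    by (simp add: open_Collect_less continuous_intros)
  have "Cinf {z. fst z > 0} (\<lambda>z. fst z powr (real l - real_of_int k) *
      lift (fst (snd z) * inverse (fst z), (inverse (fst z) *\<^sub>R ?w z)))"
    by (intro Cinf_mult Cinf_powr Cinf_lift Cinf_inverse Cinf_scaleR_component w Cinf_coordinates) auto
  then show "Cinf {z. case z of (\<rho>, u, v) \<Rightarrow> \<rho> > 0}
      (\<lambda>(\<rho>, u, v). \<rho> powr (real l - real_of_int k) * lift (u / \<rho>, (1 / \<rho>) *\<^sub>R setj j \<sigma> v))"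
    by (simp add: case_prod_unfold divide_inverse)
  have "0 < norm (?w z) ^ 2" for z
    by (intro zero_less_power less_le_trans[OF zero_less_one norm_setj_ge_1[OF assms]])
  then show "Cinf {z. fst z < 1} ?G"
    by (intro Cinf_mult Cinf_h Cinf_powr Cinf_add Cinf_norm_sq Cinf_power w Cinf_coordinates)
      (auto intro: add_nonneg_pos)
  fix z :: "real \<times> real \<times> (real^'m)"
  assume "z \<in> {z. fst z < 1}" and pos: "case z of (\<rho>, u, v) \<Rightarrow> \<rho> > 0"
  then obtain \<rho> u v where z: "z = (\<rho>, u, v)" "0 < \<rho>" "\<rho> < 1" by auto
  have "1 \<le> norm ((1 / \<rho>) *\<^sub>R setj j \<sigma> v)"
    using z norm_setj_ge_1[OF assms] by (intro norm_scaleR_ge_1) auto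
  then have "1 \<le> norm ((1 / \<rho>) *\<^sub>R (u, setj j \<sigma> v))"
    using norm_snd_le[of "(1 / \<rho>) *\<^sub>R setj j \<sigma> v" "(1 / \<rho>) * u"] by simp
  from lift_radial[OF z(2) this] show "?G z = (case z of (\<rho>, u, v) \<Rightarrow>
      \<rho> powr (real l - real_of_int k) * lift (u / \<rho>, (1 / \<rho>) *\<^sub>R setj j \<sigma> v))"
    by (simp add: z norm_Pair)
qed (auto simp: case_prod_unfold)

lemma lift_heisenberg_chart_eq:
  assumes "0 < t" "t < 1" "\<epsilon>^2 = 1"
  shows "t powr (real l' + real l - 2 * real_of_int k) * lift (\<epsilon> / t^2, (1 / t) *\<^sub>R w)
    = rescaled t \<epsilon> w * (1 + t^2 * norm w ^ 2) powr (- real_of_int k / 2)"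
proof -
  have "1 \<le> \<bar>\<epsilon> / t^2\<bar>"
    using assms by (simp add: abs_square_eq_1 power_le_one le_divide_eq)
  then have "1 \<le> norm (\<epsilon> / t^2, (1 / t) *\<^sub>R w)"
    using norm_fst_le[of "\<epsilon> / t^2" "(1 / t) *\<^sub>R w"] by simp
  from lift_parabolic_dilation[OF assms(1) this] show ?thesis by (simp add: assms(3))
qed

lemma lift_corner_chart_eq:
  assumes "0 < s" "0 < q" "s * q < 1" "1 \<le> norm w" "\<epsilon>^2 = 1"
  shows "s powr (real l' + real l - 2 * real_of_int k) * q powr (real l - real_of_int k) *
      lift (\<epsilon> / (s^2 * q), (1 / (s * q)) *\<^sub>R w)
    = rescaled s \<epsilon> w * (1 + s^2 * norm w ^ 2) powr (- real_of_int k / 2)"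
proof -
  have sq: "0 < s * q" using assms by simp
  have "1 \<le> norm ((1 / (s * q)) *\<^sub>R w)" using norm_scaleR_ge_1[OF sq] assms by simp
  then have "1 \<le> norm ((\<epsilon> * q) / (s * q)^2, (1 / (s * q)) *\<^sub>R w)"
    using norm_snd_le[of "(1 / (s * q)) *\<^sub>R w" "(\<epsilon> * q) / (s * q)^2"] by simp
  note dilation = lift_parabolic_dilation[OF sq this]
  have point: "(\<epsilon> * q) / (s * q)^2 = \<epsilon> / (s^2 * q)"
    using assms(2) by (simp add: power2_eq_square field_simps)
  have base: "(\<epsilon> * q)^2 + (s * q)^2 * norm w ^ 2 = q^2 * (1 + s^2 * norm w ^ 2)"
    using assms(5) by (simp add: power_mult_distrib algebra_simps)
  have "(s * q) powr (real l' + real l - 2 * real_of_int k) * lift (\<epsilon> / (s^2 * q), (1 / (s * q)) *\<^sub>R w)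
      = q ^ l' * rescaled s \<epsilon> w * (q^2 * (1 + s^2 * norm w ^ 2)) powr (- real_of_int k / 2)"
    using dilation unfolding point base rescaled_mult .
  also have "(q^2 * (1 + s^2 * norm w ^ 2)) powr (- real_of_int k / 2) =
      q powr (- real_of_int k) * (1 + s^2 * norm w ^ 2) powr (- real_of_int k / 2)"
    using assms(2) by (subst powr_mult) (auto simp: power_powr_eq)
  also have "q ^ l' * rescaled s \<epsilon> w * (q powr (- real_of_int k) * (1 + s^2 * norm w ^ 2) powr (- real_of_int k / 2)) =
      q powr (real l' - real_of_int k) * (rescaled s \<epsilon> w * (1 + s^2 * norm w ^ 2) powr (- real_of_int k / 2))"
    using assms(2) by (simp add: powr_realpow[symmetric] powr_add[symmetric] ac_simps)
  finally have dilated: "(s * q) powr (real l' + real l - 2 * real_of_int k) * lift (\<epsilon> / (s^2 * q), (1 / (s * q)) *\<^sub>R w) =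
      q powr (real l' - real_of_int k) * (rescaled s \<epsilon> w * (1 + s^2 * norm w ^ 2) powr (- real_of_int k / 2))" .
  have "s powr (real l' + real l - 2 * real_of_int k) * q powr (real l - real_of_int k) =
      q powr (real_of_int k - real l') * (s * q) powr (real l' + real l - 2 * real_of_int k)"
    using assms(1,2) by (simp add: powr_mult powr_add[symmetric] algebra_simps)
  then have "s powr (real l' + real l - 2 * real_of_int k) * q powr (real l - real_of_int k) *
      lift (\<epsilon> / (s^2 * q), (1 / (s * q)) *\<^sub>R w) =
      (q powr (real_of_int k - real l') * q powr (real l' - real_of_int k)) *
      (rescaled s \<epsilon> w * (1 + s^2 * norm w ^ 2) powr (- real_of_int k / 2))"
    by (simp only: dilated mult.assoc)
  also have "q powr (real_of_int k - real l') * q powr (real l' - real_of_int k) = 1"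
    using assms(2) by (simp flip: powr_add)
  finally show ?thesis by simp
qed

lemma smooth_upto_heisenberg_chart:
  assumes "\<epsilon> \<in> {1, -1}"
  shows "smooth_upto (\<lambda>(t::real, w::real^'m). t \<ge> 0) (\<lambda>(t, w). t > 0)
    (\<lambda>(t, w). t powr (real l' + real l - 2 * real_of_int k) * lift (\<epsilon> / t^2, (1 / t) *\<^sub>R w))"
proof (rule smooth_uptoI[where V = "{z. fst z < 1}"])
  let ?G = "\<lambda>z::real \<times> (real^'m). rescaled (fst z) \<epsilon> (snd z) *
    (1 + fst z ^ 2 * norm (snd z) ^ 2) powr (- real_of_int k / 2)"
  show "open {z::real \<times> (real^'m). case z of (t, w) \<Rightarrow> t > 0}"
    by (simp add: case_prod_unfold open_Collect_less continuous_intros)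
  show "open {z::real \<times> (real^'m). fst z < 1}"
    by (simp add: open_Collect_less continuous_intros)
  have "Cinf {z. fst z > 0} (\<lambda>z::real \<times> (real^'m). fst z powr (real l' + real l - 2 * real_of_int k) *
      lift (\<epsilon> * inverse (fst z) ^ 2, (inverse (fst z) *\<^sub>R snd z)))"
    by (intro Cinf_mult Cinf_powr Cinf_lift Cinf_power Cinf_inverse Cinf_scaleR_component Cinf_const
        Cinf_coordinates) auto
  then show "Cinf {z. case z of (t, w) \<Rightarrow> t > 0}
      (\<lambda>(t, w). t powr (real l' + real l - 2 * real_of_int k) * lift (\<epsilon> / t^2, (1 / t) *\<^sub>R w))"
    by (simp add: case_prod_unfold divide_inverse power_inverse)
  show "Cinf {z. fst z < 1} ?G"
    by (intro Cinf_mult Cinf_rescaled Cinf_powr Cinf_add Cinf_norm_sq Cinf_power Cinf_const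
        Cinf_coordinates) (auto intro: add_pos_nonneg)
  fix z :: "real \<times> (real^'m)"
  assume "z \<in> {z. fst z < 1}" and "case z of (t, w) \<Rightarrow> t > 0"
  then obtain t w where z: "z = (t, w)" "0 < t" "t < 1" by auto
  show "?G z = (case z of (t, w) \<Rightarrow>
      t powr (real l' + real l - 2 * real_of_int k) * lift (\<epsilon> / t^2, (1 / t) *\<^sub>R w))"
    using lift_heisenberg_chart_eq[OF z(2,3)] assms by (simp add: z power2_eq_1_iff)
qed (auto simp: case_prod_unfold)

lemma smooth_upto_corner_chart:
  assumes "\<epsilon> \<in> {1, -1}" "\<sigma> \<in> {1, -1}"
  shows "smooth_upto (\<lambda>(s::real, q::real, v::real^'m). s \<ge> 0 \<and> q \<ge> 0) (\<lambda>(s, q, v). s > 0 \<and> q > 0)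
    (\<lambda>(s, q, v). s powr (real l' + real l - 2 * real_of_int k) * q powr (real l - real_of_int k) *
      lift (\<epsilon> / (s^2 * q), (1 / (s * q)) *\<^sub>R setj j \<sigma> v))"
proof (rule smooth_uptoI[where V = "{z. fst z * fst (snd z) < 1}"])
  let ?w = "\<lambda>z::real \<times> real \<times> (real^'m). setj j \<sigma> (snd (snd z))"
  let ?G = "\<lambda>z. rescaled (fst z) \<epsilon> (?w z) * (1 + fst z ^ 2 * norm (?w z) ^ 2) powr (- real_of_int k / 2)"
  have w: "Cinf U (\<lambda>z. ?w z $ i)" for U i by (intro Cinf_setj Cinf_coordinates)
  show "open {z::real \<times> real \<times> (real^'m). case z of (s, q, v) \<Rightarrow> s > 0 \<and> q > 0}"
    by (simp add: case_prod_unfold open_Collect_conj open_Collect_less continuous_intros)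
  show "open {z::real \<times> real \<times> (real^'m). fst z * fst (snd z) < 1}"
    by (simp add: open_Collect_less continuous_intros)
  have "Cinf {z. fst z > 0 \<and> fst (snd z) > 0} (\<lambda>z.
      fst z powr (real l' + real l - 2 * real_of_int k) * fst (snd z) powr (real l - real_of_int k) *
      lift (\<epsilon> * inverse (fst z) ^ 2 * inverse (fst (snd z)),
        ((inverse (fst z) * inverse (fst (snd z))) *\<^sub>R ?w z)))"
    by (intro Cinf_mult Cinf_powr Cinf_lift Cinf_power Cinf_inverse Cinf_scaleR_component Cinf_const
        w Cinf_coordinates) auto
  then show "Cinf {z. case z of (s, q, v) \<Rightarrow> s > 0 \<and> q > 0}
      (\<lambda>(s, q, v). s powr (real l' + real l - 2 * real_of_int k) * q powr (real l - real_of_int k) *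
        lift (\<epsilon> / (s^2 * q), (1 / (s * q)) *\<^sub>R setj j \<sigma> v))"
    by (simp add: case_prod_unfold divide_inverse power_inverse mult.assoc)
  show "Cinf {z. fst z * fst (snd z) < 1} ?G"
    by (intro Cinf_mult Cinf_rescaled Cinf_powr Cinf_add Cinf_norm_sq Cinf_power Cinf_const
        w Cinf_coordinates) (auto intro: add_pos_nonneg)
  fix z :: "real \<times> real \<times> (real^'m)"
  assume "z \<in> {z. fst z * fst (snd z) < 1}" and "case z of (s, q, v) \<Rightarrow> s > 0 \<and> q > 0"
  then obtain s q v where z: "z = (s, q, v)" "0 < s" "0 < q" "s * q < 1" by auto
  show "?G z = (case z of (s, q, v) \<Rightarrow>
      s powr (real l' + real l - 2 * real_of_int k) * q powr (real l - real_of_int k) *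
      lift (\<epsilon> / (s^2 * q), (1 / (s * q)) *\<^sub>R setj j \<sigma> v))"
    using lift_corner_chart_eq[OF z(2-4) norm_setj_ge_1[OF assms(2)]] assms(1)
    by (simp add: z power2_eq_1_iff)
next
  fix z :: "real \<times> real \<times> (real^'m)"
  assume "case z of (s, q, v) \<Rightarrow> s \<ge> 0 \<and> q \<ge> 0"
  then show "(case z of (s, q, v) \<Rightarrow> s > 0 \<and> q > 0) \<or> z \<in> {z. fst z * fst (snd z) < 1}"
    by (cases z) (auto simp: less_le)
qed

lemma S_eH_lift:
  "S_eH (real l - real_of_int k) (real l' + real l - 2 * real_of_int k)
    (real l' + real l - 2 * real_of_int k) lift"
  unfolding S_eH_def if_cancel
  using Cinf_lift[OF Cinf_coordinates(1) Cinf_coordinates(3)] smooth_upto_classical_chart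
    smooth_upto_heisenberg_chart smooth_upto_corner_chart
  by simp

lemma parab_hom_principal_part:
  "parab_hom (real l' + real l - 2 * real_of_int k) \<epsilon>
    (\<lambda>(x0, x'). \<epsilon> ^ l' * \<bar>x0\<bar> powr (real l' - real_of_int k) * hs l' x')"
  unfolding parab_hom_def
proof (intro allI impI)
  fix c x0 :: real and x' :: "real^'m"
  assume c: "c > 0"
  have "\<bar>c^2 * x0\<bar> powr (real l' - real_of_int k) * c ^ (l - l') =
      c powr (2 * (real l' - real_of_int k)) * c powr (real (l - l')) * \<bar>x0\<bar> powr (real l' - real_of_int k)"
    using c by (simp add: abs_mult powr_mult power_powr_eq powr_realpow)
  also have "c powr (2 * (real l' - real_of_int k)) * c powr (real (l - l')) =
      c powr (real l' + real l - 2 * real_of_int k)"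
    using degree_le by (simp add: powr_add[symmetric] of_nat_diff algebra_simps)
  finally have "\<bar>c^2 * x0\<bar> powr (real l' - real_of_int k) * c ^ (l - l') =
      c powr (real l' + real l - 2 * real_of_int k) * \<bar>x0\<bar> powr (real l' - real_of_int k)" .
  then show "(case (c^2 * x0, c *\<^sub>R x') of (x0, x') \<Rightarrow> \<epsilon> ^ l' * \<bar>x0\<bar> powr (real l' - real_of_int k) * hs l' x') =
      c powr (real l' + real l - 2 * real_of_int k) *
      (case (x0, x') of (x0, x') \<Rightarrow> \<epsilon> ^ l' * \<bar>x0\<bar> powr (real l' - real_of_int k) * hs l' x')"
    by (simp add: hom_poly_scaleR[OF hom_poly_coeff[OF order_refl]] ac_simps)
qed

lemma heis_symbol_lift:
  assumes "\<epsilon> \<in> {1, -1}"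
  shows "heis_symbol (real l' + real l - 2 * real_of_int k) \<epsilon> lift
    (\<lambda>(x0, x'). \<epsilon> ^ l' * \<bar>x0\<bar> powr (real l' - real_of_int k) * hs l' x')"
  unfolding heis_symbol_def
proof (intro conjI parab_hom_principal_part allI impI)
  fix x0 :: real and x' :: "real^'m"
  assume "0 < \<epsilon> * x0"
  then have x0: "\<bar>x0\<bar> > 0" and x0_eq: "x0 = \<epsilon> * \<bar>x0\<bar>" using assms by auto
  define f where "f t = rescaled t x0 x' * (x0^2 + t^2 * norm x' ^ 2) powr (- real_of_int k / 2)" for t
  have "(f \<longlongrightarrow> f 0) (at_right 0)"
    unfolding f_def rescaled_def using x0 by (intro tendsto_intros) auto
  then have "((\<lambda>c. f (inverse c)) \<longlongrightarrow> f 0) at_top"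
    by (rule filterlim_compose[OF _ filterlim_inverse_at_right_top])
  moreover have "eventually (\<lambda>c. f (inverse c) =
      c powr - (real l' + real l - 2 * real_of_int k) * lift (c^2 * x0, c *\<^sub>R x')) at_top"
    using eventually_ge_at_top[of 1] eventually_ge_at_top[of "1 / \<bar>x0\<bar>"]
  proof eventually_elim
    case (elim c)
    then have "1 \<le> c * \<bar>x0\<bar>" and "c * \<bar>x0\<bar> \<le> c^2 * \<bar>x0\<bar>"
      using x0 by (auto simp: field_simps power2_eq_square intro: mult_right_mono)
    then have "1 \<le> norm (c^2 * x0, c *\<^sub>R x')"
      using norm_fst_le[of "c^2 * x0" "c *\<^sub>R x'"] by (simp add: abs_mult)
    moreover have dilation: "(x0 / (inverse c)^2, (1 / inverse c) *\<^sub>R x') = (c^2 * x0, c *\<^sub>R x')"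
      using elim by (simp add: field_simps)
    moreover have "0 < inverse c" using elim by simp
    ultimately have "inverse c powr (real l' + real l - 2 * real_of_int k) * lift (c^2 * x0, c *\<^sub>R x') =
        f (inverse c)"
      using lift_parabolic_dilation[of "inverse c" x0 x'] unfolding f_def dilation by blast
    moreover have "inverse c powr (real l' + real l - 2 * real_of_int k) =
        c powr - (real l' + real l - 2 * real_of_int k)"
      by (metis powr_minus inverse_powr)
    ultimately show ?case by simp
  qed
  moreover have "f 0 = \<epsilon> ^ l' * \<bar>x0\<bar> powr (real l' - real_of_int k) * hs l' x'"
  proof -
    have "(x0^2) powr (- real_of_int k / 2) = \<bar>x0\<bar> powr (- real_of_int k)"
      using power_powr_eq[OF x0, of 2] by simp
    then have "f 0 = (\<epsilon> * \<bar>x0\<bar>) ^ l' * hs l' x' * \<bar>x0\<bar> powr (- real_of_int k)"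
      by (simp add: f_def rescaled_zero flip: x0_eq)
    then show ?thesis
      using x0 by (simp add: power_mult_distrib powr_realpow[symmetric] powr_add[symmetric] ac_simps)
  qed
  ultimately show "((\<lambda>c. c powr - (real l' + real l - 2 * real_of_int k) * lift (c^2 * x0, c *\<^sub>R x')) \<longlongrightarrow>
      (case (x0, x') of (x0, x') \<Rightarrow> \<epsilon> ^ l' * \<bar>x0\<bar> powr (real l' - real_of_int k) * hs l' x')) at_top"
    by (simp add: tendsto_cong)
qed

end

theorem proposition3:
  fixes hs :: "nat \<Rightarrow> real^'m::finite \<Rightarrow> real"
    and h :: "real \<times> (real^'m) \<Rightarrow> real"
    and l l' :: nat and k :: int
  assumes "even CARD('m)"
    and "l' \<le> l"
    and "\<And>j. j \<le> l' \<Longrightarrow> hom_poly (l - j) (hs j)"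
    and "hs l' \<noteq> (\<lambda>_. 0)"
    and "\<And>x0 x'. h (x0, x') = (\<Sum>j\<le>l'. x0 ^ j * hs j x')"
  shows "\<exists>a. S_eH (real l - real_of_int k) (real l' + real l - 2 * real_of_int k)
                 (real l' + real l - 2 * real_of_int k) a
           \<and> (\<forall>\<eta>. norm \<eta> \<ge> 1 \<longrightarrow> a \<eta> = h \<eta> * norm \<eta> powr (- real_of_int k))
           \<and> (\<forall>\<epsilon>\<in>{1,-1}. heis_symbol (real l' + real l - 2 * real_of_int k) \<epsilon> a
                (\<lambda>(x0, x'). \<epsilon> ^ l' * \<bar>x0\<bar> powr (real l' - real_of_int k) * hs l' x'))"
proof -
  interpret eta0_expansion hs h l l' k
    using assms(2,3,5) by unfold_locales
  show ?thesis
    using S_eH_lift lift_eq heis_symbol_lift by blast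
qed

end
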